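(* Let $k\ge 2$, let $B_k$ be the automorphism group of the binary rooted tree $X^{[k]}$ and $G_k\le B_k$ the subgroup of automorphisms acting on the leaves $X^k$ by even permutations (so $G_k\cong\mathrm{Syl}_2(A_{2^k})$). An element $g\in G_k$ belongs to $G_k'$ if and only if the index of $g$ on $X^l$ is even for every $0\le l<k-1$, and moreover the number of active vertices of $g$ on level $X^{k-1}$ lying in the subtree rooted at $v_{11}$ is even and the number of those lying in the subtree rooted at $v_{12}$ is even.
   Context: $X=\{0,1\}$; $X^{[k]}$ is the binary rooted tree with levels $X^0,\dots,X^k$; $v_{11},v_{12}$ are the two vertices of level $1$. Each automorphism has at every vertex $v$ of level $<k$ a vertex permutation in $S_2$; $v$ is active if it is nontrivial. The index of $g$ on $X^l$ is the number of active vertices of $g$ in $X^l$. *)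

theory Defs
  imports "HOL-Algebra.Sym_Groups"
begin

text \<open>Vertices of the binary rooted tree X^[k]: words over X = {0,1} (encoded as bool,
  False = 0, True = 1) of length at most k. Level X^l = words of length l; the root is [].\<close>
definition tree_verts :: "nat \<Rightarrow> bool list set" where
  "tree_verts k = {xs. length xs \<le> k}"

definition tree_aut :: "nat \<Rightarrow> (bool list \<Rightarrow> bool list) \<Rightarrow> bool" where
  "tree_aut k g \<longleftrightarrow> g permutes tree_verts k \<and>
     (\<forall>v b. length v < k \<longrightarrow> (\<exists>c. g (v @ [b]) = g v @ [c]))"

text \<open>Vertex v (of level < k) is active for g iff the vertex permutation of g at v is
  nontrivial, i.e. g does not map v0 to g(v)0.\<close>
definition active :: "(bool list \<Rightarrow> bool list) \<Rightarrow> bool list \<Rightarrow> bool" where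
  "active g v \<longleftrightarrow> g (v @ [False]) \<noteq> g v @ [False]"

definition level_index :: "(bool list \<Rightarrow> bool list) \<Rightarrow> nat \<Rightarrow> nat" where
  "level_index g l = card {v. length v = l \<and> active g v}"

definition leaf_action :: "nat \<Rightarrow> (bool list \<Rightarrow> bool list) \<Rightarrow> bool list \<Rightarrow> bool list" where
  "leaf_action k g = (\<lambda>xs. if length xs = k then g xs else xs)"

definition B_grp :: "nat \<Rightarrow> (bool list \<Rightarrow> bool list) monoid" where
  "B_grp k = \<lparr>carrier = {g. tree_aut k g}, mult = (\<circ>), one = id\<rparr>"

definition G_grp :: "nat \<Rightarrow> (bool list \<Rightarrow> bool list) monoid" where
  "G_grp k = \<lparr>carrier = {g. tree_aut k g \<and> evenperm (leaf_action k g)}, mult = (\<circ>), one = id\<rparr>"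

end

theory Submission
  imports Defs
begin

text \<open>Necessity: since automorphisms permute each level and compose portraits by
  \<open>active (f \<circ> g) v = active g v \<noteq> active f (g v)\<close>, the parity of the index on a level is a
  homomorphism to \<open>\<int>/2\<close>. The sign of the action on the leaves is the parity of the index on
  \<open>X\<^bsup>k-1\<^esup>\<close>, so for elements of \<open>G\<^sub>k\<close> the active vertices of \<open>X\<^bsup>k-1\<^esup>\<close> below \<open>v\<^sub>1\<^sub>1\<close> and below
  \<open>v\<^sub>1\<^sub>2\<close> have the same parity; hence counting them below one of the two is a homomorphism
  on \<open>G\<^sub>k\<close> as well, although \<open>g\<close> may swap the two subtrees. These homomorphisms vanish on
  commutators.

  Sufficiency: for distinct \<open>u\<close>, \<open>w\<close> on a level \<open>l\<close>, let \<open>a\<close> be active exactly at \<open>u\<close> (and,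
  if \<open>l = k - 1\<close>, also at a vertex \<open>z\<close> of the other half, to keep \<open>a\<close> in \<open>G\<^sub>k\<close>), and let
  \<open>h \<in> G\<^sub>k\<close> map \<open>u\<close> to \<open>w\<close> and fix \<open>z\<close>. Then the commutator \<open>[h, a]\<close> has no active vertex above
  level \<open>l\<close>, and \<open>u\<close>, \<open>w\<close> are its only active vertices on level \<open>l\<close>. The parity conditions
  let us pair up the active vertices on the highest level carrying any (within each half
  if that level is \<open>k - 1\<close>), so multiplying by such commutators clears the levels one by
  one.\<close>

section \<open>Parity arguments\<close>

lemma odd_card_xor:
  assumes "finite A"
  shows "odd (card {x \<in> A. P x \<noteq> Q x}) \<longleftrightarrow> odd (card {x \<in> A. P x}) \<noteq> odd (card {x \<in> A. Q x})"
proof -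
  have "card {x \<in> A. P x} = card {x \<in> A. P x \<and> Q x} + card {x \<in> A. P x \<and> \<not> Q x}"
    "card {x \<in> A. Q x} = card {x \<in> A. P x \<and> Q x} + card {x \<in> A. Q x \<and> \<not> P x}"
    "card {x \<in> A. P x \<noteq> Q x} = card {x \<in> A. P x \<and> \<not> Q x} + card {x \<in> A. Q x \<and> \<not> P x}"
    by (subst card_Un_disjoint[symmetric]; use assms in \<open>auto intro!: arg_cong[where f = card]\<close>)+
  then show ?thesis by presburger
qed

lemma even_classes_Diff_pair:
  assumes "finite S" "\<And>x. x \<in> S \<Longrightarrow> even (card {y \<in> S. f y = f x})"
    and "u \<in> S" "w \<in> S" "u \<noteq> w" "f w = f u" "x \<in> S - {u, w}"
  shows "even (card {y \<in> S - {u, w}. f y = f x})"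
proof (cases "f x = f u")
  case True
  then have "{y \<in> S - {u, w}. f y = f x} = {y \<in> S. f y = f u} - {u, w}" by auto
  moreover have "card ({y \<in> S. f y = f u} - {u, w}) = card {y \<in> S. f y = f u} - 2"
    using assms(1,3-6) by (simp add: card_Diff_subset)
  moreover have "{u, w} \<subseteq> {y \<in> S. f y = f u}" using assms(3,4,6) by auto
  then have "card {u, w} \<le> card {y \<in> S. f y = f u}"
    by (rule card_mono[rotated]) (use assms(1) in simp)
  then have "card {y \<in> S. f y = f u} \<ge> 2" using assms(5) by simp
  ultimately show ?thesis using assms(2)[OF assms(3)] by simp
next
  case False
  then have "{y \<in> S - {u, w}. f y = f x} = {y \<in> S. f y = f x}" using assms(6) by auto
  then show ?thesis using assms(2,7) by simp
qed

lemma even_classes_pair_induct: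
  assumes "finite S" "\<And>x. x \<in> S \<Longrightarrow> even (card {y \<in> S. f y = f x})"
    and "P {}"
    and "\<And>u w T. insert u (insert w T) \<subseteq> S \<Longrightarrow> u \<noteq> w \<Longrightarrow> f u = f w \<Longrightarrow> u \<notin> T \<Longrightarrow> w \<notin> T
      \<Longrightarrow> P T \<Longrightarrow> P (insert u (insert w T))"
  shows "P S"
  using assms
proof (induction "card S" arbitrary: S rule: less_induct)
  case less
  show ?case
  proof (cases "S = {}")
    case True
    then show ?thesis using less.prems(3) by simp
  next
    case False
    then obtain u where u: "u \<in> S" by blast
    let ?C = "{y \<in> S. f y = f u}"
    have "u \<in> ?C" "even (card ?C)" using less.prems(2) u by auto
    moreover from this have "?C \<noteq> {u}" by auto
    ultimately obtain w where w: "w \<in> S" "w \<noteq> u" "f w = f u" by blast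
    define T where "T = S - {u, w}"
    have "card T < card S" using less.prems(1) u by (auto simp: T_def intro: psubset_card_mono)
    moreover have "finite T" using less.prems(1) by (simp add: T_def)
    moreover have "even (card {y \<in> T. f y = f x})" if "x \<in> T" for x
      using even_classes_Diff_pair[OF less.prems(1,2) u w(1) w(2)[symmetric] w(3)] that
      by (simp add: T_def)
    moreover have "P (insert u' (insert w' T'))"
      if "insert u' (insert w' T') \<subseteq> T" "u' \<noteq> w'" "f u' = f w'" "u' \<notin> T'" "w' \<notin> T'" "P T'"
      for u' w' T'
      using less.prems(4) that by (auto simp: T_def)
    ultimately have "P T" using less.hyps less.prems(3) by blast
    have "P (insert u (insert w T))"
      by (rule less.prems(4)[OF _ w(2)[symmetric] w(3)[symmetric] _ _ \<open>P T\<close>])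
        (use u w in \<open>auto simp: T_def\<close>)
    moreover have "insert u (insert w T) = S" using u w by (auto simp: T_def)
    ultimately show ?thesis by simp
  qed
qed

definition parity_group :: "bool monoid" where
  "parity_group = \<lparr>carrier = UNIV, mult = (\<noteq>), one = False\<rparr>"

lemma comm_group_parity_group: "comm_group parity_group"
  by (rule groupI[THEN group.group_comm_groupI]) (auto simp: parity_group_def)

lemma (in group) parity_hom_vanishes_on_derived:
  assumes "\<And>x y. x \<in> carrier G \<Longrightarrow> y \<in> carrier G \<Longrightarrow> \<chi> (x \<otimes> y) \<longleftrightarrow> \<chi> x \<noteq> \<chi> y"
    and "x \<in> derived G (carrier G)"
  shows "\<not> \<chi> x"
proof -
  interpret parity: comm_group parity_group by (rule comm_group_parity_group)
  interpret group_hom G parity_group \<chi>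
    using assms(1) by unfold_locales (simp add: hom_def parity_group_def)
  have "\<chi> ` derived G (carrier G) = {False}"
    using derived_img[of "carrier G"] parity.derived_eq_singleton
    by (simp add: parity_group_def)
  then show ?thesis using assms(2) by blast
qed

section \<open>Tree automorphisms and their portraits\<close>

lemma finite_tree_verts: "finite (tree_verts k)"
  unfolding tree_verts_def using finite_lists_length_le[of "UNIV :: bool set" k] by simp

lemma finite_level: "finite {v :: bool list. length v = l}"
  by (rule finite_subset[OF _ finite_tree_verts[of l]]) (auto simp: tree_verts_def)

lemma tree_aut_permutes: "tree_aut k g \<Longrightarrow> g permutes tree_verts k"
  by (simp add: tree_aut_def)

lemma tree_aut_outside: "tree_aut k g \<Longrightarrow> k < length v \<Longrightarrow> g v = v"
  using tree_aut_permutes by (fastforce simp: permutes_def tree_verts_def)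

lemma tree_aut_inj: "tree_aut k g \<Longrightarrow> inj g"
  using tree_aut_permutes permutes_inj by blast

lemma length_tree_aut_upto:
  assumes "tree_aut k g" "length v \<le> k"
  shows "length (g v) = length (g []) + length v"
  using assms(2)
proof (induction v rule: rev_induct)
  case (snoc x xs)
  then obtain c where "g (xs @ [x]) = g xs @ [c]" using assms(1) unfolding tree_aut_def by fastforce
  then show ?case using snoc by simp
qed simp

lemma tree_aut_Nil:
  assumes "tree_aut k g" shows "g [] = []"
proof -
  have "replicate k False \<in> tree_verts k" by (simp add: tree_verts_def)
  then have "g (replicate k False) \<in> tree_verts k"
    using permutes_in_image[OF tree_aut_permutes[OF assms]] by blast
  then show ?thesis
    using length_tree_aut_upto[OF assms, of "replicate k False"] by (simp add: tree_verts_def)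
qed

lemma length_tree_aut: "tree_aut k g \<Longrightarrow> length (g v) = length v"
  using length_tree_aut_upto[of k g v] tree_aut_Nil[of k g] tree_aut_outside[of k g v]
  by (cases "length v \<le> k") auto

lemma tree_aut_snoc:
  assumes "tree_aut k g" "length v < k"
  shows "g (v @ [b]) = g v @ [b \<noteq> active g v]"
proof -
  obtain c0 c1 where c: "g (v @ [False]) = g v @ [c0]" "g (v @ [True]) = g v @ [c1]"
    using assms unfolding tree_aut_def by meson
  have "g (v @ [False]) \<noteq> g (v @ [True])"
    using tree_aut_inj[OF assms(1)] by (simp add: inj_eq)
  then show ?thesis using c unfolding active_def by (cases b; cases c0; cases c1) simp_all
qed

lemma take_tree_aut:
  assumes "tree_aut k g" "length v \<le> k"
  shows "g (take n v) = take n (g v)"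
  using assms(2)
proof (induction v rule: rev_induct)
  case Nil
  then show ?case using tree_aut_Nil[OF assms(1)] by simp
next
  case (snoc x xs)
  then show ?case
    using tree_aut_snoc[OF assms(1), of xs x] length_tree_aut[OF assms(1), of xs]
    by (cases "n \<le> length xs") auto
qed

lemma nth_tree_aut:
  assumes "tree_aut k g" "length v \<le> k" "j < length v"
  shows "g v ! j = (v ! j \<noteq> active g (take j v))"
proof -
  have "take (Suc j) v = take j v @ [v ! j]"
    using assms(3) by (simp add: take_Suc_conv_app_nth)
  then have "take (Suc j) (g v) = take j (g v) @ [v ! j \<noteq> active g (take j v)]"
    using tree_aut_snoc[OF assms(1), of "take j v" "v ! j"] assms
    by (simp flip: take_tree_aut[OF assms(1,2)])
  moreover have "take (Suc j) (g v) = take j (g v) @ [g v ! j]"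
    using assms(3) length_tree_aut[OF assms(1), of v] by (simp add: take_Suc_conv_app_nth)
  ultimately show ?thesis by simp
qed

lemma tree_aut_apply_eq_iff:
  assumes "tree_aut k g" "length v \<le> k"
  shows "g v = w \<longleftrightarrow> length w = length v \<and> (\<forall>j < length v. w ! j = (v ! j \<noteq> active g (take j v)))"
  using nth_tree_aut[OF assms] length_tree_aut[OF assms(1), of v]
  by (auto intro: nth_equalityI)

lemma tree_aut_fixes_if_prefixes_inactive:
  assumes "tree_aut k g" "length v \<le> k" "\<And>j. j < length v \<Longrightarrow> \<not> active g (take j v)"
  shows "g v = v"
  using tree_aut_apply_eq_iff[OF assms(1,2)] assms(3) by simp

lemma tree_aut_fixes_upto:
  assumes "tree_aut k g" "\<And>u. length u < l \<Longrightarrow> \<not> active g u" "length v \<le> l" "l \<le> k"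
  shows "g v = v"
  using assms(3,4) by (intro tree_aut_fixes_if_prefixes_inactive[OF assms(1)] assms(2)) auto

lemma take_one_tree_aut:
  assumes "tree_aut k g" "length v \<le> k" "v \<noteq> []"
  shows "take 1 (g v) = [hd v \<noteq> active g []]"
  using nth_tree_aut[OF assms(1,2), of 0] length_tree_aut[OF assms(1), of v] assms(3)
  by (cases v; cases "g v") auto

lemma tree_aut_eqI:
  assumes "tree_aut k f" "tree_aut k g" "\<And>v. length v < k \<Longrightarrow> active f v = active g v"
  shows "f = g"
proof
  fix v
  show "f v = g v"
  proof (cases "length v \<le> k")
    case True
    have "j < length v \<Longrightarrow> length (take j v) < k" for j
      using True by simp
    then show ?thesis
      using tree_aut_apply_eq_iff[OF assms(1) True] nth_tree_aut[OF assms(2) True]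
        length_tree_aut[OF assms(2)] assms(3) by simp
  next
    case False
    then show ?thesis using tree_aut_outside assms(1,2) by (metis not_le_imp_less)
  qed
qed

lemma tree_aut_id: "tree_aut k id"
  by (auto simp: tree_aut_def permutes_id)

lemma not_active_id: "\<not> active id v"
  by (simp add: active_def)

lemma active_comp:
  assumes "tree_aut k f" "tree_aut k g" "length v < k"
  shows "active (f \<circ> g) v \<longleftrightarrow> active g v \<noteq> active f (g v)"
proof -
  have "length (g v) < k" using length_tree_aut[OF assms(2)] assms(3) by simp
  then have "(f \<circ> g) (v @ [False]) = f (g v) @ [active g v \<noteq> active f (g v)]"
    using tree_aut_snoc[OF assms(2,3), of False] tree_aut_snoc[OF assms(1)] by simp
  then show ?thesis by (simp add: active_def)
qed

lemma tree_aut_comp: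
  assumes "tree_aut k f" "tree_aut k g"
  shows "tree_aut k (f \<circ> g)"
  unfolding tree_aut_def
proof (intro conjI allI impI)
  show "f \<circ> g permutes tree_verts k"
    using tree_aut_permutes assms permutes_compose by blast
  fix v :: "bool list" and b assume "length v < k"
  then show "\<exists>c. (f \<circ> g) (v @ [b]) = (f \<circ> g) v @ [c]"
    using tree_aut_snoc[OF assms(2)] tree_aut_snoc[OF assms(1)] length_tree_aut[OF assms(2)]
    by simp
qed

lemma tree_aut_inv:
  assumes "tree_aut k g"
  shows "tree_aut k (inv_into UNIV g)"
  unfolding tree_aut_def
proof (intro conjI allI impI)
  have perm: "g permutes tree_verts k" by (rule tree_aut_permutes[OF assms])
  then show "inv_into UNIV g permutes tree_verts k" by (rule permutes_inv)
  fix v :: "bool list" and b assume "length v < k"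
  define u where "u = inv_into UNIV g v"
  have "g u = v" unfolding u_def using permutes_inverses(1)[OF perm] .
  then have "length u < k" using length_tree_aut[OF assms, of u] \<open>length v < k\<close> by simp
  then have "g (u @ [b \<noteq> active g u]) = v @ [b]"
    using tree_aut_snoc[OF assms] \<open>g u = v\<close> by simp blast
  then have "inv_into UNIV g (v @ [b]) = u @ [b \<noteq> active g u]"
    using permutes_inverses(2)[OF perm] by metis
  then show "\<exists>c. inv_into UNIV g (v @ [b]) = inv_into UNIV g v @ [c]" unfolding u_def by blast
qed

lemma active_inv:
  assumes "tree_aut k g" "length v < k"
  shows "active (inv_into UNIV g) v \<longleftrightarrow> active g (inv_into UNIV g v)"
proof -
  have "g \<circ> inv_into UNIV g = id"
    using permutes_inv_o(1)[OF tree_aut_permutes[OF assms(1)]] .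
  then show ?thesis
    using active_comp[OF assms(1) tree_aut_inv[OF assms(1)] assms(2)] not_active_id by metis
qed

definition aut_of :: "nat \<Rightarrow> (bool list \<Rightarrow> bool) \<Rightarrow> bool list \<Rightarrow> bool list" where
  "aut_of k P v = (if length v \<le> k then map (\<lambda>j. v ! j \<noteq> P (take j v)) [0..<length v] else v)"

lemma length_aut_of [simp]: "length (aut_of k P v) = length v"
  by (simp add: aut_of_def)

lemma aut_of_snoc: "length v < k \<Longrightarrow> aut_of k P (v @ [b]) = aut_of k P v @ [b \<noteq> P v]"
  by (auto simp: aut_of_def nth_append)

lemma inj_aut_of: "inj (aut_of k P)"
proof (rule injI)
  fix v w assume eq: "aut_of k P v = aut_of k P w"
  then have len: "length v = length w" by (metis length_aut_of)
  show "v = w"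
  proof (cases "length v \<le> k")
    case True
    have "j \<le> length v \<Longrightarrow> take j v = take j w" for j
    proof (induction j)
      case (Suc j)
      have "aut_of k P v ! j = aut_of k P w ! j" using eq by simp
      then have "v ! j = w ! j"
        using Suc True len by (simp add: aut_of_def) blast
      then show ?case
        using Suc len by (simp add: take_Suc_conv_app_nth)
    qed simp
    then show ?thesis using len by (metis order_refl take_all)
  next
    case False
    then show ?thesis using eq len by (simp add: aut_of_def)
  qed
qed

lemma tree_aut_aut_of: "tree_aut k (aut_of k P)"
  unfolding tree_aut_def
proof (intro conjI allI impI)
  have sub: "aut_of k P ` tree_verts k \<subseteq> tree_verts k"
    by (auto simp: tree_verts_def)
  have inj: "inj_on (aut_of k P) (tree_verts k)"
    using inj_aut_of inj_on_subset by blast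
  then have "bij_betw (aut_of k P) (tree_verts k) (tree_verts k)"
    using endo_inj_surj[OF finite_tree_verts sub inj] by (simp add: bij_betw_def)
  then show "aut_of k P permutes tree_verts k"
    by (rule bij_imp_permutes) (simp add: aut_of_def tree_verts_def)
  fix v :: "bool list" and b assume "length v < k"
  then show "\<exists>c. aut_of k P (v @ [b]) = aut_of k P v @ [c]"
    by (simp add: aut_of_snoc)
qed

lemma active_aut_of: "length v < k \<Longrightarrow> active (aut_of k P) v \<longleftrightarrow> P v"
  by (simp add: active_def aut_of_snoc)

definition flip_at :: "nat \<Rightarrow> bool list set \<Rightarrow> bool list \<Rightarrow> bool list" where
  "flip_at k S = aut_of k (\<lambda>v. v \<in> S)"

lemma tree_aut_flip_at: "tree_aut k (flip_at k S)"
  by (simp add: flip_at_def tree_aut_aut_of)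

lemma active_flip_at: "length v < k \<Longrightarrow> active (flip_at k S) v \<longleftrightarrow> v \<in> S"
  by (simp add: flip_at_def active_aut_of)

lemma flip_at_fixes:
  assumes "S \<subseteq> {v. length v = l}" "l < k" "length v \<le> l"
  shows "flip_at k S v = v"
  using assms by (intro tree_aut_fixes_upto[OF tree_aut_flip_at]) (auto simp: active_flip_at)

lemma flip_at_insert:
  assumes "insert x S \<subseteq> {v. length v = l}" "l < k" "x \<notin> S"
  shows "flip_at k (insert x S) = flip_at k S \<circ> flip_at k {x}"
proof (rule tree_aut_eqI[OF tree_aut_flip_at tree_aut_comp[OF tree_aut_flip_at tree_aut_flip_at]])
  fix v :: "bool list" assume v: "length v < k"
  have "length (flip_at k {x} v) = length v"
    by (rule length_tree_aut[OF tree_aut_flip_at])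
  moreover have "length v \<le> l \<Longrightarrow> flip_at k {x} v = v"
    using assms by (intro flip_at_fixes[of _ l]) auto
  ultimately show "active (flip_at k (insert x S)) v = active (flip_at k S \<circ> flip_at k {x}) v"
    using active_comp[OF tree_aut_flip_at tree_aut_flip_at v] assms v
    by (cases "length v \<le> l") (auto simp: active_flip_at)
qed

section \<open>The sign of the action on the leaves\<close>

lemma tree_aut_image_level:
  assumes "tree_aut k g" "l \<le> k"
  shows "g ` {v. length v = l} = {v. length v = l}"
proof
  show "g ` {v. length v = l} \<subseteq> {v. length v = l}"
    using length_tree_aut[OF assms(1)] by blast
  show "{v. length v = l} \<subseteq> g ` {v. length v = l}"
  proof
    fix w :: "bool list" assume "w \<in> {v. length v = l}"
    then have "w \<in> g ` tree_verts k"
      using permutes_image[OF tree_aut_permutes[OF assms(1)]] assms(2)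
      by (simp add: tree_verts_def)
    then show "w \<in> g ` {v. length v = l}"
      using length_tree_aut[OF assms(1)] \<open>w \<in> {v. length v = l}\<close> by force
  qed
qed

lemma leaf_action_permutes:
  assumes "tree_aut k g" "l \<le> k"
  shows "leaf_action l g permutes {v. length v = l}"
proof (rule bij_imp_permutes)
  have "inj_on (leaf_action l g) {v. length v = l}"
    using inj_on_subset[OF tree_aut_inj[OF assms(1)]]
    by (subst inj_on_cong[of _ _ g]) (auto simp: leaf_action_def)
  moreover have "leaf_action l g ` {v. length v = l} = {v. length v = l}"
    using tree_aut_image_level[OF assms] by (simp add: leaf_action_def)
  ultimately show "bij_betw (leaf_action l g) {v. length v = l} {v. length v = l}"
    by (simp add: bij_betw_def)
qed (simp add: leaf_action_def)

lemma permutation_leaf_action: "tree_aut k g \<Longrightarrow> permutation (leaf_action k g)"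
  using leaf_action_permutes[of k g k] finite_level permutes_imp_permutation by blast

lemma leaf_action_comp:
  "tree_aut k g \<Longrightarrow> leaf_action l (f \<circ> g) = leaf_action l f \<circ> leaf_action l g"
  by (auto simp: leaf_action_def length_tree_aut)

lemma leaf_action_id: "leaf_action l id = id"
  by (auto simp: leaf_action_def)

definition lift_to_children :: "(bool list \<Rightarrow> bool list) \<Rightarrow> bool list \<Rightarrow> bool list" where
  "lift_to_children s w = (if w = [] then [] else s (butlast w) @ [last w])"

lemma lift_to_children_comp: "lift_to_children (f \<circ> g) = lift_to_children f \<circ> lift_to_children g"
  by (auto simp: lift_to_children_def)

lemma lift_to_children_transpose:
  assumes "a \<noteq> b"
  shows "lift_to_children (transpose a b) =
    transpose (a @ [False]) (b @ [False]) \<circ> transpose (a @ [True]) (b @ [True])"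
proof
  fix w :: "bool list"
  show "lift_to_children (transpose a b) w =
      (transpose (a @ [False]) (b @ [False]) \<circ> transpose (a @ [True]) (b @ [True])) w"
    using assms by (cases w rule: rev_cases; cases "last w")
      (auto simp: lift_to_children_def transpose_def)
qed

lemma evenperm_lift_to_children:
  assumes "s permutes S" "finite S"
  shows "permutation (lift_to_children s) \<and> evenperm (lift_to_children s)"
  using assms
proof (induction rule: permutes_induct)
  case id
  have "lift_to_children id = id" by (auto simp: lift_to_children_def)
  then show ?case by (metis permutation_id evenperm_id)
next
  case (swap a b p)
  let ?t = "transpose (a @ [False]) (b @ [False]) \<circ> transpose (a @ [True]) (b @ [True])"
  have t: "permutation ?t"
    by (rule permutation_compose[OF permutation_swap_id permutation_swap_id])
  have "evenperm ?t"
    using evenperm_comp[OF permutation_swap_id permutation_swap_id,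
        of "a @ [False]" "b @ [False]" "a @ [True]" "b @ [True]"] swap(3)
    by (simp add: evenperm_swap)
  then have "permutation (?t \<circ> lift_to_children p) \<and> evenperm (?t \<circ> lift_to_children p)"
    using swap.IH permutation_compose[OF t, of "lift_to_children p"]
      evenperm_comp[OF t, of "lift_to_children p"] by simp
  then show ?case
    by (simp only: lift_to_children_comp lift_to_children_transpose[OF swap(3)])
qed

lemma leaf_action_Suc_eq_lift_to_children:
  assumes "tree_aut k g" "l < k" "\<And>v. length v = l \<Longrightarrow> \<not> active g v"
  shows "leaf_action (Suc l) g = lift_to_children (leaf_action l g)"
proof
  fix w :: "bool list"
  show "leaf_action (Suc l) g w = lift_to_children (leaf_action l g) w"
  proof (cases w rule: rev_cases)
    case (snoc v c)
    then show ?thesis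
      using tree_aut_snoc[OF assms(1), of v c] assms(2,3)
      by (auto simp: leaf_action_def lift_to_children_def)
  qed (simp add: leaf_action_def lift_to_children_def)
qed

lemma leaf_action_flip_at_single:
  assumes "length x = l" "l < k"
  shows "leaf_action (Suc l) (flip_at k {x}) = transpose (x @ [False]) (x @ [True])"
proof
  fix w :: "bool list"
  show "leaf_action (Suc l) (flip_at k {x}) w = transpose (x @ [False]) (x @ [True]) w"
  proof (cases w rule: rev_cases)
    case (snoc v c)
    show ?thesis
    proof (cases "length v = l")
      case True
      then have "flip_at k {x} v = v" using assms by (intro flip_at_fixes[of _ l]) auto
      then show ?thesis
        using snoc True tree_aut_snoc[OF tree_aut_flip_at, of v k] assms
        by (cases c) (auto simp: leaf_action_def transpose_def active_flip_at)
    next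
      case False
      then show ?thesis using snoc assms by (auto simp: leaf_action_def transpose_def)
    qed
  qed (simp add: leaf_action_def transpose_def)
qed

lemma evenperm_leaf_action_flip_at:
  assumes "finite S" "S \<subseteq> {v. length v = l}" "l < k"
  shows "permutation (leaf_action (Suc l) (flip_at k S))
    \<and> (evenperm (leaf_action (Suc l) (flip_at k S)) \<longleftrightarrow> even (card S))"
  using assms
proof (induction S rule: finite_induct)
  case empty
  have "flip_at k {} = id"
    by (rule tree_aut_eqI[OF tree_aut_flip_at tree_aut_id]) (simp add: active_flip_at not_active_id)
  then show ?case by (simp only: leaf_action_id permutation_id evenperm_id card.empty even_zero)
next
  case (insert x S)
  let ?L = "leaf_action (Suc l) (flip_at k S)" and ?t = "transpose (x @ [False]) (x @ [True])"
  have eq: "leaf_action (Suc l) (flip_at k (insert x S)) = ?L \<circ> ?t"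
    using flip_at_insert[OF insert(4,5,2)] leaf_action_comp[OF tree_aut_flip_at]
      leaf_action_flip_at_single[of x l k] insert(4,5) by simp
  have L: "permutation ?L" "evenperm ?L \<longleftrightarrow> even (card S)"
    using insert by auto
  have t: "permutation ?t" "\<not> evenperm ?t"
    by (simp_all add: permutation_swap_id evenperm_swap)
  have "card (insert x S) = Suc (card S)" using insert(1,2) by simp
  then have "permutation (?L \<circ> ?t) \<and> (evenperm (?L \<circ> ?t) \<longleftrightarrow> even (card (insert x S)))"
    using permutation_compose[OF L(1) t(1)] evenperm_comp[OF L(1) t(1)] L(2) t(2) by simp
  then show ?case by (simp only: eq)
qed

text \<open>Splitting off the activity on level \<open>k - 1\<close>, the rest of \<open>g\<close> acts on the leaves as a
  lifted, hence even, permutation, and each active vertex on level \<open>k - 1\<close> contributes a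
  transposition.\<close>
lemma evenperm_leaf_action_iff:
  assumes "tree_aut k g" "1 \<le> k"
  shows "evenperm (leaf_action k g) \<longleftrightarrow> even (level_index g (k - 1))"
proof -
  define S where "S = {v. length v = k - 1 \<and> active g v}"
  define g0 where "g0 = aut_of k (\<lambda>v. active g v \<and> length v \<noteq> k - 1)"
  have S: "S \<subseteq> {v. length v = k - 1}" "finite S"
    using finite_level finite_subset by (auto simp: S_def)
  have k: "Suc (k - 1) = k" "k - 1 < k" using assms(2) by auto
  have g0: "tree_aut k g0" by (simp add: g0_def tree_aut_aut_of)
  have "g = g0 \<circ> flip_at k S"
  proof (rule tree_aut_eqI[OF assms(1) tree_aut_comp[OF g0 tree_aut_flip_at]])
    fix v :: "bool list" assume v: "length v < k"
    then have "flip_at k S v = v" using flip_at_fixes[OF S(1) k(2)] by simp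
    then show "active g v = active (g0 \<circ> flip_at k S) v"
      using active_comp[OF g0 tree_aut_flip_at v] v
      by (auto simp: g0_def active_aut_of active_flip_at S_def)
  qed
  then have "leaf_action k g = leaf_action k g0 \<circ> leaf_action k (flip_at k S)"
    using leaf_action_comp[OF tree_aut_flip_at] by metis
  moreover have "leaf_action k g0 = lift_to_children (leaf_action (k - 1) g0)"
    using leaf_action_Suc_eq_lift_to_children[OF g0 k(2)] k(1)
    by (simp add: g0_def active_aut_of)
  moreover have "permutation (leaf_action k g0) \<and> evenperm (leaf_action k g0)"
    using calculation(2) evenperm_lift_to_children[OF leaf_action_permutes[OF g0] finite_level]
    by simp
  moreover have "permutation (leaf_action k (flip_at k S))
      \<and> (evenperm (leaf_action k (flip_at k S)) \<longleftrightarrow> even (card S))"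
    using evenperm_leaf_action_flip_at[OF S(2,1) k(2)] k(1) by simp
  ultimately show ?thesis by (simp add: evenperm_comp S_def level_index_def)
qed

section \<open>The group \<open>G\<^sub>k\<close> and its parity homomorphisms\<close>

lemma carrier_G_grp: "g \<in> carrier (G_grp k) \<longleftrightarrow> tree_aut k g \<and> evenperm (leaf_action k g)"
  by (simp add: G_grp_def)

lemma carrier_G_grp_iff_level_index:
  "1 \<le> k \<Longrightarrow> g \<in> carrier (G_grp k) \<longleftrightarrow> tree_aut k g \<and> even (level_index g (k - 1))"
  using evenperm_leaf_action_iff carrier_G_grp by blast

lemma mult_G_grp [simp]: "x \<otimes>\<^bsub>G_grp k\<^esub> y = x \<circ> y"
  by (simp add: G_grp_def)

lemma one_G_grp [simp]: "\<one>\<^bsub>G_grp k\<^esub> = id"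
  by (simp add: G_grp_def)

lemma inv_into_in_carrier_G_grp:
  assumes "g \<in> carrier (G_grp k)"
  shows "inv_into UNIV g \<in> carrier (G_grp k)" "inv_into UNIV g \<circ> g = id"
proof -
  have g: "tree_aut k g" "evenperm (leaf_action k g)" using assms by (auto simp: carrier_G_grp)
  show inv: "inv_into UNIV g \<circ> g = id"
    using permutes_inv_o(2)[OF tree_aut_permutes[OF g(1)]] .
  have "leaf_action k (inv_into UNIV g) \<circ> leaf_action k g = id"
    using leaf_action_comp[OF g(1), of k "inv_into UNIV g"] inv by (simp add: leaf_action_id)
  then have "evenperm (leaf_action k (inv_into UNIV g))"
    using g evenperm_comp permutation_leaf_action tree_aut_inv evenperm_id by metis
  then show "inv_into UNIV g \<in> carrier (G_grp k)"
    using tree_aut_inv[OF g(1)] by (simp add: carrier_G_grp)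
qed

lemma group_G_grp: "group (G_grp k)"
proof (rule groupI)
  fix x y assume "x \<in> carrier (G_grp k)" "y \<in> carrier (G_grp k)"
  then have "tree_aut k x" "tree_aut k y" "evenperm (leaf_action k x)" "evenperm (leaf_action k y)"
    by (auto simp: carrier_G_grp)
  then show "x \<otimes>\<^bsub>G_grp k\<^esub> y \<in> carrier (G_grp k)"
    using evenperm_comp[OF permutation_leaf_action permutation_leaf_action]
    by (simp add: carrier_G_grp leaf_action_comp tree_aut_comp)
next
  show "\<one>\<^bsub>G_grp k\<^esub> \<in> carrier (G_grp k)"
    by (simp add: carrier_G_grp tree_aut_id leaf_action_id)
next
  fix x assume "x \<in> carrier (G_grp k)"
  then show "\<exists>y\<in>carrier (G_grp k). y \<otimes>\<^bsub>G_grp k\<^esub> x = \<one>\<^bsub>G_grp k\<^esub>"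
    using inv_into_in_carrier_G_grp[of x k] by auto
qed (auto simp: o_assoc)

lemma inv_G_grp: "g \<in> carrier (G_grp k) \<Longrightarrow> inv\<^bsub>G_grp k\<^esub> g = inv_into UNIV g"
  using group.inv_equality[OF group_G_grp] inv_into_in_carrier_G_grp by fastforce

lemma odd_card_active_comp:
  assumes "tree_aut k f" "tree_aut k g" "A \<subseteq> {v. length v < k}" "finite A"
  shows "odd (card {v \<in> A. active (f \<circ> g) v})
    \<longleftrightarrow> odd (card {v \<in> g ` A. active f v}) \<noteq> odd (card {v \<in> A. active g v})"
proof -
  have "{v \<in> g ` A. active f v} = g ` {v \<in> A. active f (g v)}" by auto
  also have "card \<dots> = card {v \<in> A. active f (g v)}"
    using tree_aut_inj[OF assms(2)] by (simp add: card_image inj_on_subset)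
  finally have "card {v \<in> g ` A. active f v} = card {v \<in> A. active f (g v)}" .
  moreover have "{v \<in> A. active (f \<circ> g) v} = {v \<in> A. active f (g v) \<noteq> active g v}"
    using active_comp[OF assms(1,2)] assms(3) by auto
  ultimately show ?thesis using odd_card_xor[OF assms(4)] by simp
qed

lemma odd_level_index_comp:
  assumes "tree_aut k f" "tree_aut k g" "l < k"
  shows "odd (level_index (f \<circ> g) l) \<longleftrightarrow> odd (level_index f l) \<noteq> odd (level_index g l)"
proof -
  have "{v. length v = l} \<subseteq> {v. length v < k}" using assms(3) by auto
  then show ?thesis
    using odd_card_active_comp[OF assms(1,2), of "{v. length v = l}"] finite_level
      tree_aut_image_level[OF assms(2)] assms(3)
    by (simp add: level_index_def)
qed

definition subtree_index :: "(bool list \<Rightarrow> bool list) \<Rightarrow> bool \<Rightarrow> nat \<Rightarrow> nat" where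
  "subtree_index g b l = card {v. length v = l \<and> take 1 v = [b] \<and> active g v}"

lemma level_index_eq_subtree_indices:
  assumes "1 \<le> l"
  shows "level_index g l = subtree_index g False l + subtree_index g True l"
proof -
  have "{v. length v = l \<and> active g v} =
      {v. length v = l \<and> take 1 v = [False] \<and> active g v} \<union>
      {v. length v = l \<and> take 1 v = [True] \<and> active g v}"
  proof -
    have "take 1 v = [False] \<or> take 1 v = [True]" if "length v = l" for v :: "bool list"
      using that assms by (cases v) auto
    then show ?thesis by blast
  qed
  moreover have "finite {v. length v = l \<and> take 1 v = [b] \<and> active g v}" for b
    by (rule finite_subset[OF _ finite_level[of l]]) auto
  ultimately show ?thesis
    unfolding level_index_def subtree_index_def by (simp add: card_Un_disjoint disjoint_iff)
qed

lemma tree_aut_image_subtree: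
  assumes "tree_aut k g" "1 \<le> l" "l \<le> k"
  shows "g ` {v. length v = l \<and> take 1 v = [b]} = {v. length v = l \<and> take 1 v = [b \<noteq> active g []]}"
proof -
  have first: "take 1 (g v) = [hd v \<noteq> active g []]" if "length v = l" for v
  proof -
    have "v \<noteq> []" using that assms(2) by auto
    then show ?thesis using take_one_tree_aut[OF assms(1)] that assms(3) by blast
  qed
  have "take 1 v = [b] \<longleftrightarrow> hd v = b" if "length v = l" for v :: "bool list"
    using that assms(2) by (cases v) auto
  then have "g ` {v. length v = l \<and> take 1 v = [b]} =
      {w \<in> g ` {v. length v = l}. take 1 w = [b \<noteq> active g []]}"
    using first by auto
  then show ?thesis using tree_aut_image_level[OF assms(1,3)] by auto
qed

lemma odd_subtree_index_comp:
  assumes "tree_aut k f" "tree_aut k g" "1 \<le> l" "l < k" "even (level_index f l)"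
  shows "odd (subtree_index (f \<circ> g) b l) \<longleftrightarrow> odd (subtree_index f b l) \<noteq> odd (subtree_index g b l)"
proof -
  let ?A = "{v. length v = l \<and> take 1 v = [b]}"
  have "?A \<subseteq> {v. length v < k}" using assms(4) by auto
  moreover have "finite ?A" by (rule finite_subset[OF _ finite_level[of l]]) auto
  ultimately have "odd (subtree_index (f \<circ> g) b l) \<longleftrightarrow>
      odd (subtree_index f (b \<noteq> active g []) l) \<noteq> odd (subtree_index g b l)"
    using odd_card_active_comp[OF assms(1,2), of ?A] tree_aut_image_subtree[OF assms(2,3)] assms(4)
    by (simp add: subtree_index_def conj_assoc)
  moreover have "odd (subtree_index f False l) \<longleftrightarrow> odd (subtree_index f True l)"
    using level_index_eq_subtree_indices[OF assms(3), of f] assms(5) by simp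
  ultimately show ?thesis by (cases b; cases "active g []") auto
qed

definition even_indices :: "nat \<Rightarrow> (bool list \<Rightarrow> bool list) \<Rightarrow> bool" where
  "even_indices k g \<longleftrightarrow> (\<forall>l < k - 1. even (level_index g l))
     \<and> even (subtree_index g False (k - 1)) \<and> even (subtree_index g True (k - 1))"

lemma odd_level_index_mult:
  assumes "l < k" "f \<in> carrier (G_grp k)" "g \<in> carrier (G_grp k)"
  shows "odd (level_index (f \<otimes>\<^bsub>G_grp k\<^esub> g) l) \<longleftrightarrow> odd (level_index f l) \<noteq> odd (level_index g l)"
proof -
  have "tree_aut k f" "tree_aut k g" using assms(2,3) by (simp_all add: carrier_G_grp)
  then show ?thesis using odd_level_index_comp assms(1) by simp
qed

lemma odd_subtree_index_mult:
  assumes "2 \<le> k" "f \<in> carrier (G_grp k)" "g \<in> carrier (G_grp k)"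
  shows "odd (subtree_index (f \<otimes>\<^bsub>G_grp k\<^esub> g) b (k - 1))
    \<longleftrightarrow> odd (subtree_index f b (k - 1)) \<noteq> odd (subtree_index g b (k - 1))"
proof -
  have "tree_aut k f" "even (level_index f (k - 1))" "tree_aut k g"
    using assms by (simp_all add: carrier_G_grp_iff_level_index)
  moreover have "1 \<le> k - 1" "k - 1 < k" using assms(1) by auto
  ultimately show ?thesis using odd_subtree_index_comp by simp
qed

lemma even_indices_derived:
  assumes "2 \<le> k" "c \<in> derived (G_grp k) (carrier (G_grp k))"
  shows "even_indices k c"
proof -
  interpret G: group "G_grp k" by (rule group_G_grp)
  have "even (level_index c l)" if "l < k - 1" for l
    using G.parity_hom_vanishes_on_derived[where \<chi> = "\<lambda>g. odd (level_index g l)",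
        OF odd_level_index_mult assms(2)] that by simp
  moreover have "even (subtree_index c b (k - 1))" for b
    using G.parity_hom_vanishes_on_derived[where \<chi> = "\<lambda>g. odd (subtree_index g b (k - 1))",
        OF odd_subtree_index_mult[OF assms(1)] assms(2)] by simp
  ultimately show ?thesis unfolding even_indices_def by blast
qed

lemma even_indices_comp:
  assumes "2 \<le> k" "f \<in> carrier (G_grp k)" "g \<in> carrier (G_grp k)"
    and "even_indices k f" "even_indices k g"
  shows "even_indices k (f \<circ> g)"
proof -
  have "even (level_index (f \<circ> g) l)" if "l < k - 1" for l
    using odd_level_index_mult[OF _ assms(2,3), of l] that assms(4,5)
    unfolding even_indices_def by simp
  moreover have "even (subtree_index (f \<circ> g) b (k - 1))" for b
    using odd_subtree_index_mult[OF assms(1-3), of b] assms(4,5)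
    unfolding even_indices_def by (cases b) simp_all
  ultimately show ?thesis unfolding even_indices_def by blast
qed

section \<open>Commutators with prescribed activity\<close>

definition top_active :: "nat \<Rightarrow> bool list set \<Rightarrow> (bool list \<Rightarrow> bool list) \<Rightarrow> bool" where
  "top_active l S c \<longleftrightarrow>
     (\<forall>v. length v < l \<longrightarrow> \<not> active c v) \<and> (\<forall>v. length v = l \<longrightarrow> active c v \<longleftrightarrow> v \<in> S)"

lemma top_active_id: "top_active l {} id"
  by (simp add: top_active_def not_active_id)

lemma top_active_fixes:
  "tree_aut k c \<Longrightarrow> top_active l S c \<Longrightarrow> l \<le> k \<Longrightarrow> length v \<le> l \<Longrightarrow> c v = v"
  by (rule tree_aut_fixes_upto) (auto simp: top_active_def)

lemma top_active_comp:
  assumes "tree_aut k f" "tree_aut k g" "l < k" "top_active l S f" "top_active l T g"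
  shows "top_active l (sym_diff S T) (f \<circ> g)"
proof -
  have "active (f \<circ> g) v \<longleftrightarrow> active g v \<noteq> active f v" if "length v \<le> l" for v
    using active_comp[OF assms(1,2)] top_active_fixes[OF assms(2,5)] that assms(3) by simp
  then show ?thesis using assms(4,5) unfolding top_active_def by auto
qed

lemma top_active_inv:
  assumes "tree_aut k a" "l < k" "top_active l S a"
  shows "top_active l S (inv_into UNIV a)"
proof -
  have "inv_into UNIV a v = v" if "length v \<le> l" for v
    using top_active_fixes[OF assms(1,3)] that assms(2) tree_aut_inj[OF assms(1)]
    by (metis inv_f_f less_imp_le)
  then have "active (inv_into UNIV a) v \<longleftrightarrow> active a v" if "length v \<le> l" for v
    using active_inv[OF assms(1)] that assms(2) by simp
  then show ?thesis using assms(3) unfolding top_active_def by simp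
qed

lemma top_active_conj:
  assumes "tree_aut k h" "tree_aut k a" "l < k" "top_active l S a"
  shows "top_active l (h ` S) (h \<circ> a \<circ> inv_into UNIV h)"
proof -
  let ?h' = "inv_into UNIV h"
  have h': "tree_aut k ?h'" by (rule tree_aut_inv[OF assms(1)])
  have "active (h \<circ> a \<circ> ?h') v \<longleftrightarrow> active a (?h' v)" if "length v \<le> l" for v
  proof -
    have v: "length v < k" "length (?h' v) = length v"
      using that assms(3) length_tree_aut[OF h'] by auto
    then have "a (?h' v) = ?h' v" using top_active_fixes[OF assms(2,4)] that assms(3) by simp
    then show ?thesis
      using active_comp[OF tree_aut_comp[OF assms(1,2)] h' v(1)] active_comp[OF assms(1,2)]
        active_inv[OF assms(1) v(1)] v assms(3) by (simp; blast)
  qed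
  moreover have "?h' v \<in> S \<longleftrightarrow> v \<in> h ` S" for v
  proof
    assume "?h' v \<in> S"
    then show "v \<in> h ` S"
      using permutes_inverses(1)[OF tree_aut_permutes[OF assms(1)]] by (metis image_eqI)
  next
    assume "v \<in> h ` S"
    then show "?h' v \<in> S" using tree_aut_inj[OF assms(1)] by (auto simp: inv_f_f)
  qed
  ultimately show ?thesis
    using assms(4) length_tree_aut[OF h'] unfolding top_active_def by simp
qed

lemma top_active_commutator:
  assumes "tree_aut k h" "tree_aut k a" "l < k" "top_active l S a"
  shows "top_active l (sym_diff (h ` S) S) (h \<circ> a \<circ> inv_into UNIV h \<circ> inv_into UNIV a)"
  using top_active_comp[OF _ tree_aut_inv[OF assms(2)] assms(3)
      top_active_conj[OF assms] top_active_inv[OF assms(2-4)]]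
    tree_aut_comp tree_aut_inv assms(1,2) by blast

lemma commutator_in_derived_G_grp:
  assumes "h \<in> carrier (G_grp k)" "a \<in> carrier (G_grp k)"
  shows "h \<circ> a \<circ> inv_into UNIV h \<circ> inv_into UNIV a \<in> derived (G_grp k) (carrier (G_grp k))"
  unfolding derived_def
  by (rule generate.incl) (use assms in \<open>force simp: inv_G_grp\<close>)

lemma top_active_flip_at:
  "S \<subseteq> {v. length v = l} \<Longrightarrow> l < k \<Longrightarrow> top_active l S (flip_at k S)"
  by (auto simp: top_active_def active_flip_at)

lemma level_index_flip_at:
  "l < k \<Longrightarrow> level_index (flip_at k S) l = card (S \<inter> {v. length v = l})"
  unfolding level_index_def by (rule arg_cong[where f = card]) (auto simp: active_flip_at)

definition transporter :: "nat \<Rightarrow> bool list \<Rightarrow> bool list \<Rightarrow> bool list \<Rightarrow> bool list" where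
  "transporter k u w = aut_of k (\<lambda>x. \<exists>j < length u. x = take j u \<and> u ! j \<noteq> w ! j)"

lemma tree_aut_transporter: "tree_aut k (transporter k u w)"
  by (simp add: transporter_def tree_aut_aut_of)

lemma active_transporter_take:
  assumes "length u \<le> k" "j < length u"
  shows "active (transporter k u w) (take j u) \<longleftrightarrow> u ! j \<noteq> w ! j"
proof -
  have "take j u = take i u \<longleftrightarrow> i = j" if "i < length u" for i
  proof
    assume "take j u = take i u"
    then have "length (take j u) = length (take i u)" by simp
    then show "i = j" using that assms(2) by simp
  qed simp
  then show ?thesis using assms by (auto simp: transporter_def active_aut_of)
qed

lemma transporter_apply:
  assumes "length w = length u" "length u \<le> k"
  shows "transporter k u w u = w"
  using tree_aut_apply_eq_iff[OF tree_aut_transporter assms(2)] active_transporter_take[OF assms(2)]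
    assms(1) by auto

lemma transporter_fixes:
  assumes "length z \<le> k" "z \<noteq> []" "u \<noteq> []" "w \<noteq> []" "hd w = hd u" "hd z \<noteq> hd u"
  shows "transporter k u w z = z"
proof (rule tree_aut_fixes_if_prefixes_inactive[OF tree_aut_transporter assms(1)])
  fix j assume j: "j < length z"
  then have "length (take j z) < k" using assms(1) by simp
  then have act: "active (transporter k u w) (take j z)
      \<longleftrightarrow> (\<exists>i < length u. take j z = take i u \<and> u ! i \<noteq> w ! i)"
    by (simp add: transporter_def active_aut_of)
  have "u ! i = w ! i" if i: "take j z = take i u" "i < length u" for i
  proof (cases i)
    case 0
    then show ?thesis using assms(3-5) by (simp add: hd_conv_nth)
  next
    case (Suc i')
    have "length (take j z) = length (take i u)" using i(1) by simp
    then have "j = i" using i(2) j by simp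
    then have "z ! 0 = u ! 0" using i(1) Suc by (metis nth_take zero_less_Suc)
    then show ?thesis using assms(2,3,6) by (simp add: hd_conv_nth)
  qed
  then show "\<not> active (transporter k u w) (take j z)" using act by blast
qed

lemma level_index_transporter:
  assumes "length u \<le> l" "l < k"
  shows "level_index (transporter k u w) l = 0"
proof -
  have "{v. length v = l \<and> active (transporter k u w) v} = {}"
    using assms by (auto simp: transporter_def active_aut_of)
  then show ?thesis unfolding level_index_def by (simp only: card.empty)
qed

lemma flip_at_in_carrier_G_grp:
  assumes "1 \<le> k" "even (card (S \<inter> {v. length v = k - 1}))"
  shows "flip_at k S \<in> carrier (G_grp k)"
  using level_index_flip_at[of "k - 1" k S] assms
  by (simp add: carrier_G_grp_iff_level_index tree_aut_flip_at)

lemma transporter_in_carrier_G_grp: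
  assumes "1 \<le> k" "length u < k"
  shows "transporter k u w \<in> carrier (G_grp k)"
  using level_index_transporter[of u "k - 1" k w] assms
  by (simp add: carrier_G_grp_iff_level_index tree_aut_transporter)

lemma ex_derived_top_active_pair:
  assumes "2 \<le> k" "l < k" "u \<noteq> w" "length u = l" "length w = l"
    and "l = k - 1 \<Longrightarrow> take 1 u = take 1 w"
  shows "\<exists>c \<in> derived (G_grp k) (carrier (G_grp k)). top_active l {u, w} c"
proof -
  define z where "z = (\<not> hd u) # replicate (k - 2) False"
  define S where "S = (if l = k - 1 then {u, z} else {u})"
  define a where "a = flip_at k S"
  define h where "h = transporter k u w"
  have uw: "u \<noteq> []" "w \<noteq> []" using assms(3-5) by auto
  have z: "length z = k - 1" "z \<noteq> []" "hd z \<noteq> hd u" using assms(1) by (auto simp: z_def)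
  have hd: "hd w = hd u" if "l = k - 1"
    using assms(6)[OF that] uw by (cases u; cases w) auto
  have zuw: "z \<noteq> u" "z \<noteq> w" if "l = k - 1" using z hd[OF that] by auto
  have S: "S \<subseteq> {v. length v = l}" using z assms(4) by (auto simp: S_def)
  have "S \<inter> {v. length v = k - 1} = (if l = k - 1 then {u, z} else {})"
    using assms(4) z by (auto simp: S_def)
  then have "even (card (S \<inter> {v. length v = k - 1}))"
    using zuw by (cases "l = k - 1") auto
  then have a: "a \<in> carrier (G_grp k)"
    using flip_at_in_carrier_G_grp assms(1) by (simp add: a_def)
  have h: "h \<in> carrier (G_grp k)"
    using transporter_in_carrier_G_grp assms(1,2,4) by (simp add: h_def)
  have "h u = w" using transporter_apply assms(2,4,5) by (simp add: h_def)
  moreover have "h z = z" if "l = k - 1"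
    using transporter_fixes[of z k u w] z uw hd[OF that] assms(1) by (simp add: h_def)
  ultimately have "sym_diff (h ` S) S = {u, w}"
    using assms(3) zuw by (auto simp: S_def)
  moreover have "top_active l (sym_diff (h ` S) S) (h \<circ> a \<circ> inv_into UNIV h \<circ> inv_into UNIV a)"
    unfolding a_def h_def
    by (rule top_active_commutator[OF tree_aut_transporter tree_aut_flip_at assms(2)
        top_active_flip_at[OF S assms(2)]])
  ultimately have "top_active l {u, w} (h \<circ> a \<circ> inv_into UNIV h \<circ> inv_into UNIV a)"
    by (simp only:)
  then show ?thesis by (rule bexI[OF _ commutator_in_derived_G_grp[OF h a]])
qed

lemma derived_G_grp_subgroup: "subgroup (derived (G_grp k) (carrier (G_grp k))) (G_grp k)"
  using group.derived_is_subgroup[OF group_G_grp] by blast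

lemma tree_aut_if_derived_G_grp: "c \<in> derived (G_grp k) (carrier (G_grp k)) \<Longrightarrow> tree_aut k c"
  using subgroup.subset[OF derived_G_grp_subgroup, of k] by (auto simp: carrier_G_grp)

lemma ex_derived_top_active_sym_diff:
  assumes "l < k"
    and "\<exists>c \<in> derived (G_grp k) (carrier (G_grp k)). top_active l S c"
    and "\<exists>c \<in> derived (G_grp k) (carrier (G_grp k)). top_active l T c"
  shows "\<exists>c \<in> derived (G_grp k) (carrier (G_grp k)). top_active l (sym_diff S T) c"
proof -
  obtain c d where c: "c \<in> derived (G_grp k) (carrier (G_grp k))" "top_active l S c"
    and d: "d \<in> derived (G_grp k) (carrier (G_grp k))" "top_active l T d"
    using assms(2,3) by blast
  have "c \<circ> d \<in> derived (G_grp k) (carrier (G_grp k))"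
    using subgroup.m_closed[OF derived_G_grp_subgroup c(1) d(1)] by simp
  moreover have "top_active l (sym_diff S T) (c \<circ> d)"
    by (rule top_active_comp[OF tree_aut_if_derived_G_grp[OF c(1)] tree_aut_if_derived_G_grp[OF d(1)]
          assms(1) c(2) d(2)])
  ultimately show ?thesis by blast
qed

lemma ex_derived_top_active:
  assumes "2 \<le> k" "l < k" "S \<subseteq> {v. length v = l}"
    and "l < k - 1 \<Longrightarrow> even (card S)"
    and "\<And>b. l = k - 1 \<Longrightarrow> even (card {v \<in> S. take 1 v = [b]})"
  shows "\<exists>c \<in> derived (G_grp k) (carrier (G_grp k)). top_active l S c"
proof -
  define f where "f v = (if l = k - 1 then take 1 v else [])" for v :: "bool list"
  have "finite S" using assms(3) finite_level finite_subset by blast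
  then show ?thesis
  proof (rule even_classes_pair_induct[where f = f])
    fix x assume "x \<in> S"
    show "even (card {y \<in> S. f y = f x})"
    proof (cases "l = k - 1")
      case True
      then obtain b where "take 1 x = [b]" using \<open>x \<in> S\<close> assms(1,3) by (cases x) auto
      then show ?thesis using assms(5) True by (simp add: f_def)
    next
      case False
      then show ?thesis using assms(2,4) by (simp add: f_def)
    qed
  next
    show "\<exists>c \<in> derived (G_grp k) (carrier (G_grp k)). top_active l {} c"
      using subgroup.one_closed[OF derived_G_grp_subgroup] top_active_id by fastforce
  next
    fix u w T
    assume uwT: "insert u (insert w T) \<subseteq> S" "u \<noteq> w" "f u = f w" "u \<notin> T" "w \<notin> T"
      and T: "\<exists>c \<in> derived (G_grp k) (carrier (G_grp k)). top_active l T c"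
    have "length u = l" "length w = l" using uwT(1) assms(3) by auto
    moreover have "l = k - 1 \<Longrightarrow> take 1 u = take 1 w" using uwT(3) by (simp add: f_def)
    ultimately have "\<exists>c \<in> derived (G_grp k) (carrier (G_grp k)). top_active l {u, w} c"
      using ex_derived_top_active_pair[OF assms(1,2) uwT(2)] by blast
    then have "\<exists>c \<in> derived (G_grp k) (carrier (G_grp k)). top_active l (sym_diff T {u, w}) c"
      by (rule ex_derived_top_active_sym_diff[OF assms(2) T])
    moreover have "sym_diff T {u, w} = insert u (insert w T)" using uwT(4,5) by auto
    ultimately show "\<exists>c \<in> derived (G_grp k) (carrier (G_grp k)). top_active l (insert u (insert w T)) c"
      by (simp only:)
  qed
qed

lemma ex_derived_clearing_level:
  assumes "2 \<le> k" "l < k" "g \<in> carrier (G_grp k)" "even_indices k g"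
    and "\<And>v. length v < l \<Longrightarrow> \<not> active g v"
  obtains c where "c \<in> derived (G_grp k) (carrier (G_grp k))"
    and "\<And>v. length v < Suc l \<Longrightarrow> \<not> active (g \<circ> c) v"
proof -
  define S where "S = {v. length v = l \<and> active g v}"
  have "l < k - 1 \<Longrightarrow> even (card S)"
    using assms(4) by (simp add: S_def even_indices_def level_index_def)
  moreover have "even (card {v \<in> S. take 1 v = [b]})" if "l = k - 1" for b
  proof -
    have "{v \<in> S. take 1 v = [b]} = {v. length v = k - 1 \<and> take 1 v = [b] \<and> active g v}"
      using that by (auto simp: S_def)
    then show ?thesis
      using assms(4) by (cases b) (simp_all add: even_indices_def subtree_index_def)
  qed
  ultimately obtain c where c: "c \<in> derived (G_grp k) (carrier (G_grp k))" "top_active l S c"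
    using ex_derived_top_active[OF assms(1,2), of S] by (auto simp: S_def)
  have "tree_aut k g" using assms(3) by (simp add: carrier_G_grp)
  moreover have "top_active l S g" using assms(5) by (auto simp: top_active_def S_def)
  ultimately have "top_active l (sym_diff S S) (g \<circ> c)"
    using top_active_comp[OF _ tree_aut_if_derived_G_grp[OF c(1)] assms(2) _ c(2)] by blast
  then have "\<not> active (g \<circ> c) v" if "length v < Suc l" for v
    using that by (auto simp: top_active_def less_Suc_eq)
  with c(1) show ?thesis by (rule that)
qed

lemma derived_if_even_indices_inactive_above:
  assumes "2 \<le> k" "l \<le> k" "g \<in> carrier (G_grp k)" "even_indices k g"
    and "\<And>v. length v < l \<Longrightarrow> \<not> active g v"
  shows "g \<in> derived (G_grp k) (carrier (G_grp k))"
  using assms(2-5)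
proof (induction l arbitrary: g rule: inc_induct)
  case base
  then have "g = id"
    by (intro tree_aut_eqI[OF _ tree_aut_id]) (auto simp: carrier_G_grp not_active_id)
  then show ?case using subgroup.one_closed[OF derived_G_grp_subgroup, of k] by (simp only: one_G_grp)
next
  case (step l)
  interpret G: group "G_grp k" by (rule group_G_grp)
  obtain c where c: "c \<in> derived (G_grp k) (carrier (G_grp k))"
    and clear: "\<And>v. length v < Suc l \<Longrightarrow> \<not> active (g \<circ> c) v"
    using ex_derived_clearing_level[OF assms(1) step.hyps(2) step.prems] by blast
  have c_carrier: "c \<in> carrier (G_grp k)"
    using c subgroup.subset[OF derived_G_grp_subgroup] by blast
  have "g \<circ> c \<in> carrier (G_grp k)" using G.m_closed[OF step.prems(1) c_carrier] by simp
  moreover have "even_indices k (g \<circ> c)"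
    using even_indices_comp[OF assms(1) step.prems(1) c_carrier step.prems(2)
        even_indices_derived[OF assms(1) c]] .
  ultimately have "g \<circ> c \<in> derived (G_grp k) (carrier (G_grp k))"
    using clear by (rule step.IH)
  then have "g \<otimes>\<^bsub>G_grp k\<^esub> c \<otimes>\<^bsub>G_grp k\<^esub> inv\<^bsub>G_grp k\<^esub> c \<in> derived (G_grp k) (carrier (G_grp k))"
    using subgroup.m_closed[OF derived_G_grp_subgroup _ subgroup.m_inv_closed[OF derived_G_grp_subgroup c]]
    by simp
  moreover have "g \<otimes>\<^bsub>G_grp k\<^esub> c \<otimes>\<^bsub>G_grp k\<^esub> inv\<^bsub>G_grp k\<^esub> c = g"
    using step.prems(1) c_carrier by (simp add: G.m_assoc del: mult_G_grp one_G_grp)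
  ultimately show ?case by simp
qed

theorem lemma8:
  fixes k :: nat and g :: "bool list \<Rightarrow> bool list"
  assumes "k \<ge> 2" and "g \<in> carrier (G_grp k)"
  shows "g \<in> derived (G_grp k) (carrier (G_grp k)) \<longleftrightarrow>
    ((\<forall>l < k - 1. even (level_index g l)) \<and>
     even (card {v. length v = k - 1 \<and> take 1 v = [False] \<and> active g v}) \<and>
     even (card {v. length v = k - 1 \<and> take 1 v = [True] \<and> active g v}))"
proof -
  have "g \<in> derived (G_grp k) (carrier (G_grp k)) \<longleftrightarrow> even_indices k g"
    using even_indices_derived[OF assms(1)]
      derived_if_even_indices_inactive_above[OF assms(1) _ assms(2), of 0]
    by auto
  then show ?thesis unfolding even_indices_def subtree_index_def .
qed

end
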